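(* Let $\alpha,\gamma\in(0,1)$, $f\in C^1[0,1]$ with $f(0)=0$, $D\in C^1[0,1]$ with $D>0$ on $(0,\alpha)$ and $D<0$ on $(\alpha,1)$, $g\in C^0[0,1]$ with $g<0$ on $(0,\gamma)$, $g>0$ on $(\gamma,1)$ and $g(0)=g(\gamma)=g(1)=0$. Let $\phi$ be the profile of a wavefront with speed $c$. Then the function $\mathcal V(\xi):=D(\phi(\xi))\phi'(\xi)$, defined for a.e. $\xi\in\mathbb R$, has a continuous extension to all of $\mathbb R$. Moreover $\lim_{\xi\to\xi_1^+}\mathcal V(\xi)=0$ and $\lim_{\xi\to\xi_0^-}\mathcal V(\xi)=0$, where $\xi_1:=\inf\{\xi:\phi(\xi)<1\}\in[-\infty,\infty)$ and $\xi_0:=\sup\{\xi:\phi(\xi)>0\}\in(-\infty,\infty]$.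
   Context: A traveling wave with speed $c$ and profile $\phi$ on $\mathbb R$ is a function $\phi\in C(\mathbb R)$ with values in $[0,1]$, differentiable a.e., with $D(\phi)\phi'\in L^1_{\rm loc}(\mathbb R)$, such that $\int_{\mathbb R}\big(D(\phi)\phi'-f(\phi)+c\phi\big)\psi'-g(\phi)\psi\,d\xi=0$ for all $\psi\in C_0^\infty(\mathbb R)$. A wavefront is such a traveling wave whose profile is monotone and non-constant; profiles are taken non-increasing with $\phi(-\infty)=1$, $\phi(+\infty)=0$. *)

theory Defs
  imports "HOL-Analysis.Analysis"
begin

definition C1_on :: "real \<Rightarrow> real \<Rightarrow> (real \<Rightarrow> real) \<Rightarrow> bool" where
  "C1_on a b h \<longleftrightarrow> (\<exists>h'. continuous_on {a..b} h' \<and>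
      (\<forall>x\<in>{a..b}. (h has_real_derivative h' x) (at x within {a..b})))"

definition test_function :: "(real \<Rightarrow> real) \<Rightarrow> bool" where
  "test_function \<psi> \<longleftrightarrow> (\<forall>k x. ((deriv ^^ k) \<psi>) differentiable (at x))
      \<and> bounded {x. \<psi> x \<noteq> 0}"

definition traveling_wave ::
  "(real \<Rightarrow> real) \<Rightarrow> (real \<Rightarrow> real) \<Rightarrow> (real \<Rightarrow> real) \<Rightarrow> real \<Rightarrow> (real \<Rightarrow> real) \<Rightarrow> bool" where
  "traveling_wave D f g c \<phi> \<longleftrightarrow>
     continuous_on UNIV \<phi> \<and> (\<forall>\<xi>. \<phi> \<xi> \<in> {0..1}) \<and>
     (AE \<xi> in lborel. \<phi> differentiable (at \<xi>)) \<and>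
     (\<forall>K. compact K \<longrightarrow> set_integrable lborel K (\<lambda>\<xi>. D (\<phi> \<xi>) * deriv \<phi> \<xi>)) \<and>
     (\<forall>\<psi>. test_function \<psi> \<longrightarrow>
        (LINT \<xi>|lborel. (D (\<phi> \<xi>) * deriv \<phi> \<xi> - f (\<phi> \<xi>) + c * \<phi> \<xi>) * deriv \<psi> \<xi>
                        - g (\<phi> \<xi>) * \<psi> \<xi>) = 0)"

text \<open>Wavefront: monotone non-constant traveling wave; normalized non-increasing
  with \<phi>(-\<infinity>) = 1, \<phi>(+\<infinity>) = 0.\<close>
definition wavefront ::
  "(real \<Rightarrow> real) \<Rightarrow> (real \<Rightarrow> real) \<Rightarrow> (real \<Rightarrow> real) \<Rightarrow> real \<Rightarrow> (real \<Rightarrow> real) \<Rightarrow> bool" where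
  "wavefront D f g c \<phi> \<longleftrightarrow> traveling_wave D f g c \<phi> \<and> antimono \<phi> \<and>
     (\<exists>x y. \<phi> x \<noteq> \<phi> y) \<and> (\<phi> \<longlongrightarrow> 1) at_bot \<and> (\<phi> \<longlongrightarrow> 0) at_top"

end

theory Submission
  imports Defs "HOL-Computational_Algebra.Polynomial"
begin

(* Let G be a primitive of g(phi).  Testing the weak equation against psi and integrating
   G psi' by parts shows that H = D(phi) phi' - f(phi) + c phi + G (first_integral below)
   has weak derivative 0.  Testing against smooth approximations of the step functions
   1_(s,s+L] - L 1_(0,1] shows that all interval means of H agree, so H is almost
   everywhere equal to a constant k, and W = f(phi) - c phi - G + k (continuous_flux) is
   a continuous representative of D(phi) phi'.

   Where phi is constant, i.e. left of xi_1 and right of xi_0, phi' = 0; so W vanishes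
   there and its one-sided limits at xi_1 and xi_0 are 0 by continuity.  Near -oo and +oo
   the sign of g makes G monotone while f(phi) - c phi converges, so W - (f(phi) - c phi)
   is monotone there and W x is squeezed between the values of W at points on either side
   of x.  Moreover |W| >= e on [a,b] forces |phi'| >= e / max |D| almost everywhere on
   [a,b], and since phi is monotone, the change of variables formula gives
   e (b - a) <= max |D| (phi a - phi b) <= max |D|.  Hence small values of W occur in
   every long interval, and W tends to 0 at -oo and +oo. *)

section \<open>Smooth functions\<close>

lemma real_differentiable_iff_field_differentiable:
  "(f :: real \<Rightarrow> real) differentiable (at x) \<longleftrightarrow> f field_differentiable (at x)"
  by (metis DERIV_deriv_iff_field_differentiable DERIV_deriv_iff_real_differentiable)

definition differentiable_upto :: "nat \<Rightarrow> (real \<Rightarrow> real) \<Rightarrow> bool" where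
  "differentiable_upto n f \<longleftrightarrow> (\<forall>k<n. \<forall>x. (deriv ^^ k) f differentiable (at x))"

definition smooth :: "(real \<Rightarrow> real) \<Rightarrow> bool" where
  "smooth f \<longleftrightarrow> (\<forall>k x. (deriv ^^ k) f differentiable (at x))"

lemma differentiable_upto_0 [simp]: "differentiable_upto 0 f"
  by (simp add: differentiable_upto_def)

lemma differentiable_upto_Suc:
  "differentiable_upto (Suc n) f \<longleftrightarrow>
     (\<forall>x. f differentiable (at x)) \<and> differentiable_upto n (deriv f)"
  unfolding differentiable_upto_def All_less_Suc2
  by (simp add: funpow_Suc_right del: funpow.simps)

lemma differentiable_upto_Suc_D: "differentiable_upto (Suc n) f \<Longrightarrow> differentiable_upto n f"
  by (simp add: differentiable_upto_def)

lemma smooth_iff_differentiable_upto: "smooth f \<longleftrightarrow> (\<forall>n. differentiable_upto n f)"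
  unfolding smooth_def differentiable_upto_def by (blast intro: lessI)

lemma smooth_iff_deriv: "smooth f \<longleftrightarrow> (\<forall>x. f differentiable (at x)) \<and> smooth (deriv f)"
proof -
  have "smooth f \<longleftrightarrow> (\<forall>n. differentiable_upto (Suc n) f)"
    unfolding smooth_iff_differentiable_upto by (metis differentiable_upto_Suc_D)
  then show ?thesis
    unfolding differentiable_upto_Suc smooth_iff_differentiable_upto by blast
qed

lemma differentiable_upto_const: "differentiable_upto n (\<lambda>x. c)"
  by (induction n arbitrary: c) (simp_all add: differentiable_upto_Suc)

lemma differentiable_upto_add:
  "differentiable_upto n f \<Longrightarrow> differentiable_upto n g \<Longrightarrow> differentiable_upto n (\<lambda>x. f x + g x)"
proof (induction n arbitrary: f g)
  case (Suc n)
  have f: "\<And>x. f differentiable (at x)" "differentiable_upto n (deriv f)"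
    and g: "\<And>x. g differentiable (at x)" "differentiable_upto n (deriv g)"
    using Suc.prems by (simp_all add: differentiable_upto_Suc)
  have "deriv (\<lambda>x. f x + g x) = (\<lambda>x. deriv f x + deriv g x)"
    using f g by (intro ext deriv_add) (simp_all add: real_differentiable_iff_field_differentiable)
  then show ?case
    using f g by (simp add: differentiable_upto_Suc Suc.IH)
qed simp

lemma differentiable_upto_mult:
  "differentiable_upto n f \<Longrightarrow> differentiable_upto n g \<Longrightarrow> differentiable_upto n (\<lambda>x. f x * g x)"
proof (induction n arbitrary: f g)
  case (Suc n)
  have f: "\<And>x. f differentiable (at x)" "differentiable_upto n f" "differentiable_upto n (deriv f)"
    and g: "\<And>x. g differentiable (at x)" "differentiable_upto n g" "differentiable_upto n (deriv g)"
    using Suc.prems Suc.prems[THEN differentiable_upto_Suc_D]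
    by (simp_all add: differentiable_upto_Suc)
  have "deriv (\<lambda>x. f x * g x) = (\<lambda>x. f x * deriv g x + deriv f x * g x)"
    using f g by (intro ext deriv_mult) (simp_all add: real_differentiable_iff_field_differentiable)
  then show ?case
    using f g by (simp add: differentiable_upto_Suc differentiable_upto_add Suc.IH)
qed simp

lemma differentiable_upto_affine_comp:
  "differentiable_upto n f \<Longrightarrow> differentiable_upto n (\<lambda>x. f (a * x + b))"
proof (induction n arbitrary: f)
  case (Suc n)
  have f: "\<And>x. f differentiable (at x)" "differentiable_upto n (deriv f)"
    using Suc.prems by (simp_all add: differentiable_upto_Suc)
  have "deriv (\<lambda>x. f (a * x + b)) = (\<lambda>x. a * deriv f (a * x + b))"
    using f by (intro ext deriv_compose_linear') (simp add: real_differentiable_iff_field_differentiable)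
  moreover have "(\<lambda>x. f (a * x + b)) differentiable (at x)" for x
    using differentiable_chain_at[of "\<lambda>x. a * x + b" x f] f(1) by (simp add: o_def)
  moreover have "differentiable_upto n (\<lambda>x. a * deriv f (a * x + b))"
    using differentiable_upto_mult[OF differentiable_upto_const Suc.IH[OF f(2)]] .
  ultimately show ?case
    by (simp add: differentiable_upto_Suc)
qed simp

lemma smooth_const: "smooth (\<lambda>x. c)"
  by (simp add: smooth_iff_differentiable_upto differentiable_upto_const)

lemma smooth_add: "smooth f \<Longrightarrow> smooth g \<Longrightarrow> smooth (\<lambda>x. f x + g x)"
  by (simp add: smooth_iff_differentiable_upto differentiable_upto_add)

lemma smooth_mult: "smooth f \<Longrightarrow> smooth g \<Longrightarrow> smooth (\<lambda>x. f x * g x)"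
  by (simp add: smooth_iff_differentiable_upto differentiable_upto_mult)

lemma smooth_diff: "smooth f \<Longrightarrow> smooth g \<Longrightarrow> smooth (\<lambda>x. f x - g x)"
  using smooth_add[OF _ smooth_mult[OF smooth_const, of g "-1"]] by simp

lemma smooth_affine_comp: "smooth f \<Longrightarrow> smooth (\<lambda>x. f (a * x + b))"
  by (simp add: smooth_iff_differentiable_upto differentiable_upto_affine_comp)

lemma smooth_differentiable: "smooth f \<Longrightarrow> f differentiable (at x)"
  using smooth_iff_deriv by blast

lemma smooth_continuous: "smooth f \<Longrightarrow> continuous_on UNIV f"
  by (meson continuous_at_imp_continuous_on differentiable_imp_continuous_within smooth_differentiable)

lemma smooth_has_derivative: "smooth f \<Longrightarrow> (f has_real_derivative deriv f x) (at x)"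
  by (simp add: DERIV_deriv_iff_real_differentiable smooth_differentiable)

lemma smooth_deriv_continuous: "smooth f \<Longrightarrow> continuous_on UNIV (deriv f)"
  using smooth_continuous smooth_iff_deriv by blast

lemma smooth_imp_test_function:
  assumes "smooth \<psi>" "\<And>x. R \<le> \<bar>x\<bar> \<Longrightarrow> \<psi> x = 0"
  shows "test_function \<psi>"
proof -
  have "{x. \<psi> x \<noteq> 0} \<subseteq> cball 0 R"
    using assms(2) by (force simp: dist_norm)
  then have "bounded {x. \<psi> x \<noteq> 0}"
    using bounded_cball bounded_subset by blast
  then show ?thesis
    using assms(1) unfolding test_function_def smooth_def by blast
qed

definition exp_recip_poly :: "real poly \<Rightarrow> real \<Rightarrow> real" where
  "exp_recip_poly p x = (if x > 0 then poly p (1 / x) * exp (- 1 / x) else 0)"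

lemma poly_times_exp_neg_tendsto_0:
  fixes p :: "real poly"
  shows "((\<lambda>t. poly p t * exp (- t)) \<longlongrightarrow> 0) at_top"
proof -
  have "((\<lambda>t. \<Sum>i\<le>degree p. coeff p i * (t ^ i / exp t)) \<longlongrightarrow> (\<Sum>i\<le>degree p. coeff p i * 0)) at_top"
    by (intro tendsto_sum tendsto_mult tendsto_const tendsto_power_div_exp_0)
  moreover have "poly p t * exp (- t) = (\<Sum>i\<le>degree p. coeff p i * (t ^ i / exp t))" for t
    by (simp add: poly_altdef exp_minus divide_inverse sum_distrib_right mult.assoc)
  ultimately show ?thesis by simp
qed

lemma exp_recip_poly_has_derivative:
  "(exp_recip_poly p has_real_derivative exp_recip_poly ([:0, 0, 1:] * (p - pderiv p)) x) (at x)"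
proof (cases x "0 :: real" rule: linorder_cases)
  case less
  have "((\<lambda>x. 0) has_real_derivative exp_recip_poly ([:0, 0, 1:] * (p - pderiv p)) x) (at x)"
    using less by (simp add: exp_recip_poly_def)
  then show ?thesis
    by (rule has_field_derivative_transform_within_open[where S = "{..<0}"])
      (use less in \<open>auto simp: exp_recip_poly_def\<close>)
next
  case equal
  have "((\<lambda>h. (exp_recip_poly p h - exp_recip_poly p 0) / h) \<longlongrightarrow> 0) (at 0)"
  proof (rule filterlim_split_at)
    show "((\<lambda>h. (exp_recip_poly p h - exp_recip_poly p 0) / h) \<longlongrightarrow> 0) (at_left 0)"
      by (rule tendsto_eventually)
        (auto simp: exp_recip_poly_def eventually_at_left_field intro: exI[of _ "-1"])
    have "((\<lambda>h. poly (pCons 0 p) (inverse h) * exp (- inverse h)) \<longlongrightarrow> 0) (at_right 0)"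
      using poly_times_exp_neg_tendsto_0 filterlim_inverse_at_top_right by (rule filterlim_compose)
    then show "((\<lambda>h. (exp_recip_poly p h - exp_recip_poly p 0) / h) \<longlongrightarrow> 0) (at_right 0)"
      by (rule Lim_transform_eventually)
        (auto simp: exp_recip_poly_def eventually_at_right_field field_simps intro!: exI[of _ 1])
  qed
  then show ?thesis
    using equal by (simp add: DERIV_def exp_recip_poly_def)
next
  case greater
  have "((\<lambda>x. poly p (1 / x) * exp (- 1 / x)) has_real_derivative
      poly (pderiv p) (1 / x) * (- 1 / x\<^sup>2) * exp (- 1 / x) + poly p (1 / x) * (exp (- 1 / x) * (1 / x\<^sup>2))) (at x)"
    using greater
    by (auto intro!: derivative_eq_intros DERIV_chain2[OF poly_DERIV] simp: power2_eq_square)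
  moreover have "poly (pderiv p) (1 / x) * (- 1 / x\<^sup>2) * exp (- 1 / x) + poly p (1 / x) * (exp (- 1 / x) * (1 / x\<^sup>2))
      = exp_recip_poly ([:0, 0, 1:] * (p - pderiv p)) x"
    using greater by (simp add: exp_recip_poly_def algebra_simps power2_eq_square)
  ultimately show ?thesis
    by (rule_tac has_field_derivative_transform_within_open[where S = "{0<..}"])
      (use greater in \<open>auto simp: exp_recip_poly_def\<close>)
qed

lemma smooth_exp_recip_poly: "smooth (exp_recip_poly p)"
proof -
  have "differentiable_upto n (exp_recip_poly p)" for n
  proof (induction n arbitrary: p)
    case (Suc n)
    have "deriv (exp_recip_poly p) = exp_recip_poly ([:0, 0, 1:] * (p - pderiv p))"
      using exp_recip_poly_has_derivative by (intro ext DERIV_imp_deriv)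
    then show ?case
      using exp_recip_poly_has_derivative Suc.IH
      by (auto simp: differentiable_upto_Suc real_differentiable_def)
  qed simp
  then show ?thesis
    by (simp add: smooth_iff_differentiable_upto)
qed

section \<open>Primitives and integrals\<close>

definition primitive :: "(real \<Rightarrow> real) \<Rightarrow> real \<Rightarrow> real" where
  "primitive k x = integral {0..x} k - integral {x..0} k"

lemma primitive_eq_integral_from:
  assumes "continuous_on UNIV k" "y \<in> {-r..r}"
  shows "primitive k y = integral {-r..y} k - integral {-r..0} k"
proof (cases "y \<ge> 0")
  case True
  have "integral {-r..0} k + integral {0..y} k = integral {-r..y} k"
    using True assms
    by (intro Henstock_Kurzweil_Integration.integral_combine integrable_continuous_interval
        continuous_on_subset[OF assms(1)]) auto
  then show ?thesis
    using True by (cases "y = 0") (auto simp: primitive_def)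
next
  case False
  have "integral {-r..y} k + integral {y..0} k = integral {-r..0} k"
    using False assms
    by (intro Henstock_Kurzweil_Integration.integral_combine integrable_continuous_interval
        continuous_on_subset[OF assms(1)]) auto
  then show ?thesis
    using False by (simp add: primitive_def)
qed

lemma primitive_has_derivative:
  assumes k: "continuous_on UNIV k"
  shows "(primitive k has_real_derivative k x) (at x)"
proof -
  define r where "r = \<bar>x\<bar> + 1"
  have "((\<lambda>y. integral {-r..y} k) has_real_derivative k x) (at x within {-r..r})"
    by (rule integral_has_real_derivative) (auto intro: continuous_on_subset[OF k] simp: r_def)
  then have "((\<lambda>y. integral {-r..y} k - integral {-r..0} k) has_real_derivative k x) (at x)"
    using DERIV_diff[OF _ DERIV_const] by (subst (asm) at_within_interior) (auto simp: r_def)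
  then show ?thesis
    by (rule has_field_derivative_transform_within_open[where S = "{-r<..<r}"])
      (auto simp: r_def primitive_eq_integral_from[OF k, of _ r])
qed

lemma deriv_primitive: "continuous_on UNIV k \<Longrightarrow> deriv (primitive k) = k"
  by (intro ext DERIV_imp_deriv primitive_has_derivative)

lemma primitive_has_integral:
  assumes "continuous_on UNIV k" "a \<le> b"
  shows "(k has_integral (primitive k b - primitive k a)) {a..b}"
  using assms primitive_has_derivative
  by (intro fundamental_theorem_of_calculus)
    (auto intro: has_field_derivative_at_within simp: has_real_derivative_iff_has_vector_derivative[symmetric])

lemma primitive_eq_0:
  assumes "\<And>y. y \<le> 0 \<Longrightarrow> k y = 0" "x \<le> 0"
  shows "primitive k x = 0"
proof -
  have "integral {x..0} k = 0" "integral {0..x} k = 0"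
    using assms by (auto intro!: trans[OF integral_cong integral_0])
  then show ?thesis
    by (simp add: primitive_def)
qed

lemma primitive_mono:
  assumes "continuous_on UNIV k" "a \<le> b" "\<And>x. x \<in> {a..b} \<Longrightarrow> 0 \<le> k x"
  shows "primitive k a \<le> primitive k b"
  using has_integral_nonneg[OF primitive_has_integral[OF assms(1,2)] assms(3)] by simp

lemma primitive_antimono:
  assumes "continuous_on UNIV k" "a \<le> b" "\<And>x. x \<in> {a..b} \<Longrightarrow> k x \<le> 0"
  shows "primitive k b \<le> primitive k a"
  using has_integral_le[OF primitive_has_integral[OF assms(1,2)] has_integral_0 assms(3)] by simp

lemma continuous_primitive: "continuous_on UNIV k \<Longrightarrow> continuous_on UNIV (primitive k)"
  by (meson DERIV_isCont continuous_at_imp_continuous_on primitive_has_derivative)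

lemma smooth_primitive: "smooth k \<Longrightarrow> smooth (primitive k)"
  using primitive_has_derivative[OF smooth_continuous] deriv_primitive[OF smooth_continuous]
  by (subst smooth_iff_deriv) (auto simp: real_differentiable_def)

lemma set_integral_primitive_by_parts:
  fixes k \<psi> :: "real \<Rightarrow> real"
  assumes k: "continuous_on UNIV k" and \<psi>: "smooth \<psi>" and "a \<le> b" "\<psi> a = 0" "\<psi> b = 0"
  shows "(LINT x:{a..b}|lborel. k x * \<psi> x) = - (LINT x:{a..b}|lborel. primitive k x * deriv \<psi> x)"
proof -
  have cont: "continuous_on {a..b} (\<lambda>x. k x * \<psi> x)" "continuous_on {a..b} (\<lambda>x. primitive k x * deriv \<psi> x)"
    by (auto intro!: continuous_intros continuous_on_subset[OF k] continuous_on_subset[OF continuous_primitive[OF k]]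
        continuous_on_subset[OF smooth_continuous[OF \<psi>]] continuous_on_subset[OF smooth_deriv_continuous[OF \<psi>]])
  have "((\<lambda>x. k x * \<psi> x + primitive k x * deriv \<psi> x) has_integral
      (primitive k b * \<psi> b - primitive k a * \<psi> a)) {a..b}"
  proof (rule fundamental_theorem_of_calculus[OF \<open>a \<le> b\<close>])
    fix x
    have "((\<lambda>x. primitive k x * \<psi> x) has_real_derivative k x * \<psi> x + primitive k x * deriv \<psi> x) (at x)"
      using DERIV_mult[OF primitive_has_derivative[OF k] smooth_has_derivative[OF \<psi>]] by (simp add: algebra_simps)
    then show "((\<lambda>x. primitive k x * \<psi> x) has_vector_derivative k x * \<psi> x + primitive k x * deriv \<psi> x)
        (at x within {a..b})"
      by (simp add: has_real_derivative_iff_has_vector_derivative[symmetric] has_field_derivative_at_within)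
  qed
  note sum = this
  have int: "set_integrable lborel {a..b} (\<lambda>x. k x * \<psi> x)"
    "set_integrable lborel {a..b} (\<lambda>x. primitive k x * deriv \<psi> x)"
    using cont by (simp_all add: borel_integrable_atLeastAtMost')
  have "(LINT x:{a..b}|lborel. k x * \<psi> x) + (LINT x:{a..b}|lborel. primitive k x * deriv \<psi> x)
      = (LINT x:{a..b}|lborel. k x * \<psi> x + primitive k x * deriv \<psi> x)"
    using int by (rule set_integral_add(2)[symmetric])
  also have "\<dots> = integral {a..b} (\<lambda>x. k x * \<psi> x + primitive k x * deriv \<psi> x)"
    using int by (intro set_borel_integral_eq_integral(2) set_integral_add(1))
  also have "\<dots> = 0"
    using integral_unique[OF sum] assms(4,5) by simp
  finally show ?thesis
    by linarith
qed

lemma set_integrable_mult_continuous: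
  fixes h u :: "real \<Rightarrow> real"
  assumes h: "set_integrable lborel K h" and K: "compact K" and u: "continuous_on K u"
  shows "set_integrable lborel K (\<lambda>x. h x * u x)"
proof -
  obtain B where B: "0 \<le> B" "\<And>x. x \<in> K \<Longrightarrow> \<bar>u x\<bar> \<le> B"
    using compact_imp_bounded[OF compact_continuous_image[OF u K]]
    by (metis abs_ge_zero bounded_real imageI order.trans)
  show ?thesis
  proof (rule set_integrable_bound[where f = "\<lambda>x. B * h x"])
    show "set_integrable lborel K (\<lambda>x. B * h x)"
      using h by auto
    have [measurable]: "(\<lambda>x. indicator K x *\<^sub>R h x) \<in> borel_measurable borel"
      using borel_measurable_integrable[OF h[unfolded set_integrable_def]] by simp
    have [measurable]: "(\<lambda>x. indicator K x *\<^sub>R u x) \<in> borel_measurable borel"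
      using borel_measurable_continuous_on_indicator[OF _ u] K by (simp add: compact_imp_closed)
    have "(\<lambda>x. (indicator K x *\<^sub>R h x) * (indicator K x *\<^sub>R u x)) \<in> borel_measurable borel"
      by measurable
    moreover have "(\<lambda>x. (indicator K x *\<^sub>R h x) * (indicator K x *\<^sub>R u x)) = (\<lambda>x. indicator K x *\<^sub>R (h x * u x))"
      by (auto simp: indicator_def)
    ultimately show "set_borel_measurable lborel K (\<lambda>x. h x * u x)"
      unfolding set_borel_measurable_def by simp
    show "AE x in lborel. x \<in> K \<longrightarrow> norm (h x * u x) \<le> norm (B * h x)"
      using B by (intro AE_I2) (auto simp: abs_mult mult.commute[of B] intro: mult_left_mono)
  qed
qed

lemma AE_zero_if_set_integrals_greaterThan_zero:
  fixes h :: "real \<Rightarrow> real"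
  assumes h: "integrable lborel h" and zero: "\<And>x. (LINT y:{x<..}|lborel. h y) = 0"
  shows "AE x in lborel. h x = 0"
proof -
  define p where "p x = max 0 (h x)" for x
  define q where "q x = max 0 (- h x)" for x
  have p: "integrable lborel p" and q: "integrable lborel q"
    unfolding p_def[abs_def] q_def[abs_def] using h by auto
  have [measurable]: "p \<in> borel_measurable borel" "q \<in> borel_measurable borel"
    using borel_measurable_integrable[OF p] borel_measurable_integrable[OF q] by simp_all
  have nonneg: "0 \<le> p x" "0 \<le> q x" for x
    by (simp_all add: p_def q_def)
  have emeasure_eq: "emeasure (density lborel r) {x<..} = ennreal (LINT y:{x<..}|lborel. r y)"
    if "integrable lborel r" "\<And>y. 0 \<le> r y" for r :: "real \<Rightarrow> real" and x
    using that borel_measurable_integrable[OF that(1)]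
    by (simp add: emeasure_density nn_set_integral_eq_set_integral[symmetric] mult.commute)
  have "(LINT y:{x<..}|lborel. p y) - (LINT y:{x<..}|lborel. q y) = (LINT y:{x<..}|lborel. h y)" for x
  proof -
    have "set_integrable lborel {x<..} p" "set_integrable lborel {x<..} q"
      using integrable_mult_indicator[OF _ p] integrable_mult_indicator[OF _ q]
      by (simp_all add: set_integrable_def)
    then have "(LINT y:{x<..}|lborel. p y) - (LINT y:{x<..}|lborel. q y) = (LINT y:{x<..}|lborel. p y - q y)"
      by (rule set_integral_diff(2)[symmetric])
    also have "\<dots> = (LINT y:{x<..}|lborel. h y)"
      by (rule set_lebesgue_integral_cong) (auto simp: p_def q_def)
    finally show ?thesis .
  qed
  then have "density lborel p = density lborel q"
    using zero p q nonneg
    by (intro measure_eqI_lessThan) (auto simp: emeasure_eq)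
  then have "AE x in lborel. ennreal (p x) = ennreal (q x)"
    by (intro sigma_finite_measure.density_unique[OF sigma_finite_lborel]) auto
  then show ?thesis
    by eventually_elim (auto simp: p_def q_def max_def split: if_splits)
qed

lemma AE_zero_if_interval_integrals_zero:
  fixes h :: "real \<Rightarrow> real"
  assumes int: "\<And>a b. set_integrable lborel {a<..b} h"
    and zero: "\<And>a b. a < b \<Longrightarrow> (LINT x:{a<..b}|lborel. h x) = 0"
  shows "AE x in lborel. h x = 0"
proof -
  have "AE x in lborel. indicator {-real n<..real n} x * h x = 0" for n :: nat
  proof (rule AE_zero_if_set_integrals_greaterThan_zero)
    show "integrable lborel (\<lambda>x. indicator {-real n<..real n} x * h x)"
      using int unfolding set_integrable_def by simp
    fix x
    have "(LINT y:{x<..}|lborel. indicator {-real n<..real n} y * h y)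
        = (LINT y:{max x (-real n)<..real n}|lborel. h y)"
      unfolding set_lebesgue_integral_def
      by (intro Bochner_Integration.integral_cong) (auto simp: indicator_def)
    also have "\<dots> = 0"
      using zero by (cases "max x (-real n) < real n") (auto simp: set_lebesgue_integral_def)
    finally show "(LINT y:{x<..}|lborel. indicator {-real n<..real n} y * h y) = 0" .
  qed
  then have "AE x in lborel. \<forall>n::nat. indicator {-real n<..real n} x * h x = 0"
    by (subst AE_all_countable) auto
  then show ?thesis
  proof eventually_elim
    case (elim x)
    obtain n :: nat where "\<bar>x\<bar> < n"
      using reals_Archimedean2 by blast
    then show ?case
      using elim[rule_format, of n] by (auto simp: indicator_def)
  qed
qed

section \<open>Smoothed indicator functions\<close>

definition bump :: "real \<Rightarrow> real" where
  "bump x = exp_recip_poly 1 x * exp_recip_poly 1 (1 - x)"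

lemma bump_eq: "bump x = (if 0 < x \<and> x < 1 then exp (- 1 / x) * exp (- 1 / (1 - x)) else 0)"
  by (simp add: bump_def exp_recip_poly_def)

lemma smooth_bump: "smooth bump"
  using smooth_mult[OF smooth_exp_recip_poly smooth_affine_comp[OF smooth_exp_recip_poly, of _ "-1" 1]]
  by (simp add: bump_def[abs_def])

lemma bump_nonneg: "0 \<le> bump x"
  by (simp add: bump_eq)

lemma continuous_bump: "continuous_on UNIV bump"
  by (rule smooth_continuous[OF smooth_bump])

lemma integral_bump_pos: "integral {0..1} bump > 0"
proof -
  have int: "bump integrable_on {0..1}"
    by (rule integrable_continuous_interval[OF continuous_on_subset[OF continuous_bump]]) simp
  have "integral {0..1} bump \<ge> 0"
    by (intro integral_nonneg int bump_nonneg)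
  moreover have "integral {0..1} bump \<noteq> 0"
  proof
    assume "integral {0..1} bump = 0"
    then have "(bump has_integral 0) (cbox 0 1)"
      using int by (metis box_real(2) has_integral_integral)
    then have "bump (1/2) = 0"
      by (intro has_integral_0_cbox_imp_0[of 0 1 bump])
        (auto intro: continuous_on_subset[OF continuous_bump] bump_nonneg)
    then show False
      by (simp add: bump_eq)
  qed
  ultimately show ?thesis by simp
qed

definition smooth_step :: "real \<Rightarrow> real" where
  "smooth_step = primitive (\<lambda>x. bump x / integral {0..1} bump)"

lemma continuous_normalized_bump: "continuous_on UNIV (\<lambda>x. bump x / integral {0..1} bump)"
  using integral_bump_pos by (intro continuous_intros continuous_bump) auto

lemma smooth_step_has_derivative:
  "(smooth_step has_real_derivative bump x / integral {0..1} bump) (at x)"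
  unfolding smooth_step_def by (rule primitive_has_derivative[OF continuous_normalized_bump])

lemma smooth_smooth_step: "smooth smooth_step"
  unfolding smooth_step_def
  by (intro smooth_primitive smooth_mult[OF smooth_bump smooth_const, of "1 / integral {0..1} bump", simplified])

lemma smooth_step_eq_0: "x \<le> 0 \<Longrightarrow> smooth_step x = 0"
  unfolding smooth_step_def by (rule primitive_eq_0) (simp add: bump_eq)

lemma smooth_step_eq_1:
  assumes "1 \<le> x"
  shows "smooth_step x = 1"
proof -
  let ?k = "\<lambda>y. bump y / integral {0..1} bump"
  have "integral {0..1} ?k + integral {1..x} ?k = integral {0..x} ?k"
    using assms by (intro Henstock_Kurzweil_Integration.integral_combine integrable_continuous_interval
        continuous_on_subset[OF continuous_normalized_bump]) auto
  moreover have "integral {1..x} ?k = 0"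
    by (auto intro!: trans[OF integral_cong integral_0] simp: bump_eq)
  moreover have "integral {0..1} ?k = 1"
    using integral_bump_pos by simp
  moreover have "integral {x..0} ?k = 0"
    using assms by simp
  ultimately show ?thesis
    by (simp only: smooth_step_def primitive_def add_0_right diff_zero)
qed

lemma smooth_step_mono: "x \<le> y \<Longrightarrow> smooth_step x \<le> smooth_step y"
  by (erule DERIV_nonneg_imp_nondecreasing)
    (use smooth_step_has_derivative in \<open>blast intro: divide_nonneg_pos bump_nonneg integral_bump_pos\<close>)

lemma smooth_step_bounds: "0 \<le> smooth_step x" "smooth_step x \<le> 1"
  using smooth_step_mono[of "min x 0" x] smooth_step_mono[of x "max x 1"]
    smooth_step_eq_0[of "min x 0"] smooth_step_eq_1[of "max x 1"]
  by simp_all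

definition smooth_ramp :: "real \<Rightarrow> real" where
  "smooth_ramp = primitive smooth_step"

lemma smooth_ramp_has_derivative: "(smooth_ramp has_real_derivative smooth_step x) (at x)"
  unfolding smooth_ramp_def by (rule primitive_has_derivative[OF smooth_continuous[OF smooth_smooth_step]])

lemma smooth_smooth_ramp: "smooth smooth_ramp"
  unfolding smooth_ramp_def by (rule smooth_primitive[OF smooth_smooth_step])

lemma smooth_ramp_eq_0: "x \<le> 0 \<Longrightarrow> smooth_ramp x = 0"
  unfolding smooth_ramp_def by (rule primitive_eq_0) (simp add: smooth_step_eq_0)

lemma smooth_ramp_diff:
  assumes "1 \<le> x" "x \<le> y"
  shows "smooth_ramp y - smooth_ramp x = y - x"
proof -
  have "(smooth_step has_integral (smooth_ramp y - smooth_ramp x)) {x..y}"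
    unfolding smooth_ramp_def
    by (rule primitive_has_integral[OF smooth_continuous[OF smooth_smooth_step] assms(2)])
  moreover have "((\<lambda>_. 1) has_integral (y - x)) {x..y}"
    using has_integral_const_real[of "1 :: real" x y] assms(2) by simp
  then have "(smooth_step has_integral (y - x)) {x..y}"
    using assms(1) by (subst has_integral_cong[of _ _ "\<lambda>_. 1"]) (auto simp: smooth_step_eq_1)
  ultimately show ?thesis
    by (rule has_integral_unique)
qed

definition smoothed_ramp :: "real \<Rightarrow> real \<Rightarrow> real \<Rightarrow> real \<Rightarrow> real" where
  "smoothed_ramp e a b x = e * (smooth_ramp ((x - a) / e) - smooth_ramp ((x - b) / e))"

definition smoothed_indicator :: "real \<Rightarrow> real \<Rightarrow> real \<Rightarrow> real \<Rightarrow> real" where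
  "smoothed_indicator e a b x = smooth_step ((x - a) / e) - smooth_step ((x - b) / e)"

lemma smoothed_ramp_has_derivative:
  assumes "0 < e"
  shows "(smoothed_ramp e a b has_real_derivative smoothed_indicator e a b x) (at x)"
proof -
  have "((\<lambda>x. (x - c) / e) has_real_derivative 1 / e) (at x)" for c
    using assms by (auto intro!: derivative_eq_intros)
  then have "((\<lambda>x. smooth_ramp ((x - c) / e)) has_real_derivative smooth_step ((x - c) / e) / e) (at x)" for c
    using DERIV_chain2[OF smooth_ramp_has_derivative] by fastforce
  from DERIV_cmult[OF DERIV_diff[OF this this], of e] show ?thesis
    using assms by (simp add: smoothed_ramp_def[abs_def] smoothed_indicator_def right_diff_distrib)
qed

lemma deriv_smoothed_ramp: "0 < e \<Longrightarrow> deriv (smoothed_ramp e a b) = smoothed_indicator e a b"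
  by (intro ext DERIV_imp_deriv smoothed_ramp_has_derivative)

lemma smooth_smoothed_ramp: "smooth (smoothed_ramp e a b)"
proof -
  have "smooth (\<lambda>x. smooth_ramp ((1 / e) * x + (- c / e)))" for c
    by (rule smooth_affine_comp[OF smooth_smooth_ramp])
  then have "smooth (\<lambda>x. e * (smooth_ramp ((1 / e) * x + (- a / e)) - smooth_ramp ((1 / e) * x + (- b / e))))"
    by (intro smooth_mult smooth_diff smooth_const)
  then show ?thesis
    by (simp add: smoothed_ramp_def[abs_def] diff_divide_distrib)
qed

lemma continuous_smoothed_indicator: "0 < e \<Longrightarrow> continuous_on UNIV (smoothed_indicator e a b)"
  by (metis deriv_smoothed_ramp smooth_deriv_continuous smooth_smoothed_ramp)

lemma smoothed_ramp_eq_0: "0 < e \<Longrightarrow> x \<le> a \<Longrightarrow> a \<le> b \<Longrightarrow> smoothed_ramp e a b x = 0"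
  by (simp add: smoothed_ramp_def smooth_ramp_eq_0 divide_nonpos_pos)

lemma smoothed_ramp_eq_length:
  assumes "0 < e" "a \<le> b" "b + e \<le> x"
  shows "smoothed_ramp e a b x = b - a"
proof -
  have "smooth_ramp ((x - a) / e) - smooth_ramp ((x - b) / e) = (x - a) / e - (x - b) / e"
    using assms by (intro smooth_ramp_diff) (auto simp: le_divide_eq divide_right_mono)
  then have "smoothed_ramp e a b x = e * ((x - a) / e - (x - b) / e)"
    by (simp add: smoothed_ramp_def)
  then show ?thesis
    using assms(1) by (simp add: diff_divide_distrib[symmetric])
qed

lemma abs_smoothed_indicator_le_1: "\<bar>smoothed_indicator e a b x\<bar> \<le> 1"
  using smooth_step_bounds[of "(x - a) / e"] smooth_step_bounds[of "(x - b) / e"]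
  by (simp add: smoothed_indicator_def)

lemma tendsto_smooth_step_rescaled:
  "(\<lambda>n. smooth_step ((x - a) / (1 / Suc n))) \<longlonglongrightarrow> (if a < x then 1 else 0)"
proof (cases "a < x")
  case True
  obtain N :: nat where N: "1 / (x - a) < N"
    using reals_Archimedean2 by blast
  have "1 \<le> (x - a) * Suc n" if "N \<le> n" for n
  proof -
    have "1 < (x - a) * N"
      using N True by (simp add: divide_less_eq mult.commute)
    also have "\<dots> \<le> (x - a) * Suc n"
      using that True by (intro mult_left_mono) auto
    finally show ?thesis by simp
  qed
  then have "\<forall>\<^sub>F n in sequentially. smooth_step ((x - a) / (1 / Suc n)) = 1"
    unfolding eventually_sequentially using smooth_step_eq_1 by force
  then show ?thesis
    using True tendsto_eventually by auto
next
  case False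
  then show ?thesis
    by (simp add: smooth_step_eq_0 mult_nonpos_nonneg)
qed

lemma tendsto_smoothed_indicator:
  assumes "a \<le> b"
  shows "(\<lambda>n. smoothed_indicator (1 / Suc n) a b x) \<longlonglongrightarrow> indicator {a<..b} x"
proof -
  have "(if a < x then 1 else 0) - (if b < x then 1 else 0) = (indicator {a<..b} x :: real)"
    using assms by (auto simp: indicator_def)
  then show ?thesis
    unfolding smoothed_indicator_def
    using tendsto_diff[OF tendsto_smooth_step_rescaled[of x a] tendsto_smooth_step_rescaled[of x b]] by simp
qed

lemma tendsto_integral_smoothed_indicator:
  fixes h :: "real \<Rightarrow> real"
  assumes h: "integrable lborel h" and "a \<le> b"
  shows "(\<lambda>n. LINT x|lborel. h x * smoothed_indicator (1 / Suc n) a b x)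
    \<longlonglongrightarrow> (LINT x:{a<..b}|lborel. h x)"
proof -
  have [measurable]: "h \<in> borel_measurable borel"
    using borel_measurable_integrable[OF h] by simp
  have [measurable]: "smoothed_indicator (1 / Suc n) a b \<in> borel_measurable borel" for n
    by (intro borel_measurable_continuous_onI continuous_smoothed_indicator) simp
  have "(\<lambda>n. LINT x|lborel. h x * smoothed_indicator (1 / Suc n) a b x)
      \<longlonglongrightarrow> (LINT x|lborel. h x * indicator {a<..b} x)"
  proof (rule integral_dominated_convergence[where w = "\<lambda>x. norm (h x)"])
    show "AE x in lborel. (\<lambda>n. h x * smoothed_indicator (1 / Suc n) a b x) \<longlonglongrightarrow> h x * indicator {a<..b} x"
      using assms(2) by (intro AE_I2 tendsto_mult tendsto_const tendsto_smoothed_indicator)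
    show "AE x in lborel. norm (h x * smoothed_indicator (1 / Suc n) a b x) \<le> norm (h x)" for n
      using abs_smoothed_indicator_le_1 by (intro AE_I2) (simp add: abs_mult mult_left_le)
    show "(\<lambda>x. h x * smoothed_indicator (1 / Suc n) a b x) \<in> borel_measurable lborel" for n
      by measurable
  qed (use h in simp_all)
  then show ?thesis
    by (simp add: set_lebesgue_integral_def mult.commute)
qed

section \<open>Monotone functions\<close>

lemma antimono_has_derivative_nonpos:
  fixes \<phi> :: "real \<Rightarrow> real"
  assumes "antimono \<phi>" "(\<phi> has_real_derivative d) (at x)"
  shows "d \<le> 0"
proof (rule ccontr)
  assume "\<not> d \<le> 0"
  then obtain r where "0 < r" "\<And>h. 0 < h \<Longrightarrow> h < r \<Longrightarrow> \<phi> x < \<phi> (x + h)"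
    using DERIV_pos_inc_right[OF assms(2)] by force
  then have "\<phi> x < \<phi> (x + r / 2)"
    by simp
  moreover have "\<phi> (x + r / 2) \<le> \<phi> x"
    using assms(1) \<open>0 < r\<close> by (simp add: antimonoD)
  ultimately show False
    by simp
qed

lemma antimono_strict_if_negative_derivative:
  fixes \<phi> :: "real \<Rightarrow> real"
  assumes "antimono \<phi>" "(\<phi> has_real_derivative d) (at x)" "d < 0" "x < y"
  shows "\<phi> y < \<phi> x"
proof -
  obtain r where "0 < r" "\<And>h. 0 < h \<Longrightarrow> h < r \<Longrightarrow> \<phi> (x + h) < \<phi> x"
    using DERIV_neg_dec_right[OF assms(2,3)] by force
  then have "\<phi> (x + min (r / 2) (y - x)) < \<phi> x"
    using assms(4) by simp
  moreover have "\<phi> y \<le> \<phi> (x + min (r / 2) (y - x))"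
    using assms(1) by (simp add: antimonoD)
  ultimately show ?thesis
    by simp
qed

lemma antimono_inj_on_if_negative_derivative:
  fixes \<phi> :: "real \<Rightarrow> real"
  assumes "antimono \<phi>" "\<And>x. x \<in> S \<Longrightarrow> (\<phi> has_real_derivative \<phi>' x) (at x)"
    "\<And>x. x \<in> S \<Longrightarrow> \<phi>' x < 0"
  shows "inj_on \<phi> S"
proof (rule linorder_inj_onI)
  fix x y assume "x < y" "x \<in> S"
  then show "\<phi> x \<noteq> \<phi> y"
    using antimono_strict_if_negative_derivative[OF assms(1) assms(2,3)] by fastforce
qed auto

lemma AE_subset_interval_full_measure:
  fixes P :: "real \<Rightarrow> bool"
  assumes "AE x in lborel. x \<in> {a..b} \<longrightarrow> P x" "a \<le> b"
  shows "{x \<in> {a..b}. P x} \<in> lmeasurable" "measure lebesgue {x \<in> {a..b}. P x} = b - a"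
proof -
  let ?S = "{x \<in> {a..b}. P x}"
  obtain N where "{x \<in> space lborel. \<not> (x \<in> {a..b} \<longrightarrow> P x)} \<subseteq> N" "N \<in> null_sets lborel"
    using assms(1) unfolding eventually_ae_filter by blast
  then have null: "{a..b} - ?S \<in> null_sets lebesgue"
    by (intro null_sets_completion_subset[OF _ null_sets_completionI]) auto
  have eq: "?S = {a..b} - ({a..b} - ?S)"
    by auto
  have "{a..b} - ({a..b} - ?S) \<in> sets lebesgue"
    by (intro sets.Diff null_setsD2[OF null]) simp
  then have "?S \<in> sets lebesgue"
    by (simp only: eq[symmetric])
  then show "?S \<in> lmeasurable"
    by (intro bounded_set_imp_lmeasurable bounded_subset[OF bounded_closed_interval[of a b]]) auto
  have "measure lebesgue ?S = measure lebesgue {a..b}"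
    using null by (subst eq, intro measure_Diff_null_set) auto
  then show "measure lebesgue ?S = b - a"
    using assms(2) by simp
qed

lemma antimono_steep_interval_length:
  fixes \<phi> :: "real \<Rightarrow> real"
  assumes anti: "antimono \<phi>" and "a \<le> b" "0 < \<delta>"
    and steep: "AE x in lborel. x \<in> {a..b} \<longrightarrow> \<phi> differentiable (at x) \<and> \<delta> \<le> \<bar>deriv \<phi> x\<bar>"
  shows "\<delta> * (b - a) \<le> \<phi> a - \<phi> b"
proof -
  define S where "S = {x \<in> {a..b}. \<phi> differentiable (at x) \<and> \<delta> \<le> \<bar>deriv \<phi> x\<bar>}"
  have S: "S \<in> lmeasurable" "measure lebesgue S = b - a"
    unfolding S_def using AE_subset_interval_full_measure[OF steep \<open>a \<le> b\<close>] by auto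
  have der: "(\<phi> has_real_derivative deriv \<phi> x) (at x)" if "x \<in> S" for x
    using that by (simp add: S_def DERIV_deriv_iff_real_differentiable)
  have neg: "deriv \<phi> x < 0" if "x \<in> S" for x
    using antimono_has_derivative_nonpos[OF anti der[OF that]] that \<open>0 < \<delta>\<close> by (auto simp: S_def)
  have "inj_on \<phi> S"
    by (rule antimono_inj_on_if_negative_derivative[OF anti der neg])
  moreover have "\<And>x. x \<in> S \<Longrightarrow> (\<phi> has_real_derivative deriv \<phi> x) (at x within S)"
    using der by (simp add: has_field_derivative_at_within)
  ultimately have change: "(\<lambda>x. \<bar>deriv \<phi> x\<bar> * 1) absolutely_integrable_on S \<and>
      integral S (\<lambda>x. \<bar>deriv \<phi> x\<bar> * 1) = integral (\<phi> ` S) (\<lambda>_. 1)"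
    if "(\<lambda>_. 1 :: real) absolutely_integrable_on \<phi> ` S"
    using has_absolute_integral_change_of_variables_1'[OF fmeasurableD[OF S(1)],
        of \<phi> "deriv \<phi>" "\<lambda>_. 1" "integral (\<phi> ` S) (\<lambda>_. 1)"] that by blast
  have image: "\<phi> ` S \<in> lmeasurable"
  proof (rule bounded_set_imp_lmeasurable)
    show "\<phi> ` S \<in> sets lebesgue"
      by (intro differentiable_image_in_sets_lebesgue differentiable_at_imp_differentiable_on
          fmeasurableD[OF S(1)]) (auto simp: S_def)
    show "bounded (\<phi> ` S)"
      using anti by (intro bounded_subset[OF bounded_closed_interval[of "\<phi> b" "\<phi> a"]])
        (auto simp: S_def antimonoD)
  qed
  obtain int: "(\<lambda>x. \<bar>deriv \<phi> x\<bar> * 1) integrable_on S"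
    and eq: "integral S (\<lambda>x. \<bar>deriv \<phi> x\<bar> * 1) = integral (\<phi> ` S) (\<lambda>_. 1)"
    using change[OF absolutely_integrable_on_const[OF image]] by (auto simp: absolutely_integrable_on_def)
  have "\<delta> * (b - a) = integral S (\<lambda>_. \<delta>)"
    using S integral_cmul[of S \<delta> "\<lambda>_. 1 :: real"] by (simp add: lmeasure_integral)
  also have "\<dots> \<le> integral S (\<lambda>x. \<bar>deriv \<phi> x\<bar> * 1)"
    using int integrable_on_const[OF S(1)] by (intro integral_le) (auto simp: S_def)
  also have "\<dots> = measure lebesgue (\<phi> ` S)"
    using eq image by (simp add: lmeasure_integral)
  also have "\<dots> \<le> measure lebesgue {\<phi> b..\<phi> a}"
    using image anti by (intro measure_mono_fmeasurable) (auto simp: S_def antimonoD)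
  also have "\<dots> = \<phi> a - \<phi> b"
    using anti \<open>a \<le> b\<close> by (simp add: antimonoD)
  finally show ?thesis .
qed

section \<open>Vanishing limits\<close>

lemma tendsto_0_at_bot_if_short_excursions:
  fixes W P :: "real \<Rightarrow> real"
  assumes P: "(P \<longlongrightarrow> l) at_bot"
    and anti: "\<And>x y. x \<le> y \<Longrightarrow> y \<le> M \<Longrightarrow> W y - P y \<le> W x - P x"
    and short: "\<And>a b e. a \<le> b \<Longrightarrow> 0 < e \<Longrightarrow> (\<And>x. x \<in> {a..b} \<Longrightarrow> e \<le> \<bar>W x\<bar>) \<Longrightarrow> e * (b - a) \<le> C"
  shows "(W \<longlongrightarrow> 0) at_bot"
proof (rule tendstoI)
  fix \<epsilon> :: real
  assume "0 < \<epsilon>"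
  define e where "e = \<epsilon> / 3"
  define L where "L = \<bar>C\<bar> / e + 1"
  have e: "0 < e"
    using \<open>0 < \<epsilon>\<close> by (simp add: e_def)
  then have "0 \<le> \<bar>C\<bar> / e"
    by simp
  then have L: "0 < L" "C < e * L"
    unfolding L_def using e by (linarith, simp add: distrib_left)
  obtain N where N: "N \<le> M" "\<And>x. x \<le> N \<Longrightarrow> \<bar>P x - l\<bar> < e"
    using tendstoD[OF P e] by (auto simp: eventually_at_bot_linorder dist_real_def)
      (metis min.cobounded1 min.cobounded2 order.trans)
  have small: "\<exists>y\<in>{b - L..b}. \<bar>W y\<bar> < e" for b
    using short[of "b - L" b e] e L by (force simp: not_less)
  \<comment> \<open>\<open>W - P\<close> is antitone, so \<open>W x\<close> is squeezed between small values of \<open>W\<close> on either side\<close>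
  have "\<bar>W x\<bar> < 3 * e" if "x \<le> N - L" for x
  proof -
    obtain y1 where y1: "y1 \<in> {x - L..x}" "\<bar>W y1\<bar> < e"
      using small by blast
    obtain y2 where y2: "y2 \<in> {x..x + L}" "\<bar>W y2\<bar> < e"
      using small[of "x + L"] by auto
    have "W x - P x \<le> W y1 - P y1" "W y2 - P y2 \<le> W x - P x"
      using y1 y2 that L N(1) by (auto intro!: anti)
    moreover have "\<bar>P x - l\<bar> < e" "\<bar>P y1 - l\<bar> < e" "\<bar>P y2 - l\<bar> < e"
      using y1 y2 that L by (auto intro!: N(2))
    ultimately show ?thesis
      using y1(2) y2(2) by linarith
  qed
  then show "\<forall>\<^sub>F x in at_bot. dist (W x) 0 < \<epsilon>"
    unfolding eventually_at_bot_linorder by (auto simp: e_def)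
qed

lemma tendsto_0_at_top_if_short_excursions:
  fixes W P :: "real \<Rightarrow> real"
  assumes P: "(P \<longlongrightarrow> l) at_top"
    and mono: "\<And>x y. M \<le> x \<Longrightarrow> x \<le> y \<Longrightarrow> W x - P x \<le> W y - P y"
    and short: "\<And>a b e. a \<le> b \<Longrightarrow> 0 < e \<Longrightarrow> (\<And>x. x \<in> {a..b} \<Longrightarrow> e \<le> \<bar>W x\<bar>) \<Longrightarrow> e * (b - a) \<le> C"
  shows "(W \<longlongrightarrow> 0) at_top"
  unfolding filterlim_at_top_mirror
proof (rule tendsto_0_at_bot_if_short_excursions)
  show "((\<lambda>x. P (- x)) \<longlongrightarrow> l) at_bot"
    using P by (simp add: filterlim_at_top_mirror)
  show "W (- y) - P (- y) \<le> W (- x) - P (- x)" if "x \<le> y" "y \<le> - M" for x y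
    using that by (intro mono) auto
  fix a b e :: real
  assume "a \<le> b" "0 < e" and large: "\<And>x. x \<in> {a..b} \<Longrightarrow> e \<le> \<bar>W (- x)\<bar>"
  have "e \<le> \<bar>W x\<bar>" if "x \<in> {- b..- a}" for x
    using large[of "- x"] that by simp
  then show "e * (b - a) \<le> C"
    using short[of "- b" "- a" e] \<open>a \<le> b\<close> \<open>0 < e\<close> by simp
qed

lemma continuous_zero_if_AE_zero_on_open:
  fixes W :: "real \<Rightarrow> real"
  assumes "continuous_on UNIV W" "open U" "AE x in lborel. x \<in> U \<longrightarrow> W x = 0" "x \<in> U"
  shows "W x = 0"
proof -
  have "closed (W -` {0})"
    using assms(1) by (intro continuous_closed_vimage) (auto simp: continuous_on_eq_continuous_at)
  moreover have "AE x in lebesgue. x \<in> U \<longrightarrow> x \<in> W -` {0}"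
    using assms(3) by (intro AE_completion) auto
  ultimately show ?thesis
    using mem_closed_if_AE_lebesgue_open[OF assms(2) _ _ assms(4)] by blast
qed

lemma tendsto_at_right_if_zero_below:
  fixes W :: "real \<Rightarrow> real"
  assumes "isCont W a" "\<And>x. x < a \<Longrightarrow> W x = 0"
  shows "(W \<longlongrightarrow> 0) (at_right a)"
proof -
  have "(W \<longlongrightarrow> 0) (at_left a)"
    using assms(2) by (intro tendsto_eventually) (auto simp: eventually_at_left_field intro!: exI[of _ "a - 1"])
  then have "W a = 0"
    using assms(1) tendsto_unique[of "at_left a" W "W a" 0] by (simp add: isCont_def filterlim_at_split)
  then show ?thesis
    using assms(1) by (simp add: isCont_def filterlim_at_split)
qed

lemma tendsto_at_left_if_zero_above:
  fixes W :: "real \<Rightarrow> real"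
  assumes "isCont W a" "\<And>x. a < x \<Longrightarrow> W x = 0"
  shows "(W \<longlongrightarrow> 0) (at_left a)"
proof -
  have "(W \<longlongrightarrow> 0) (at_right a)"
    using assms(2) by (intro tendsto_eventually) (auto simp: eventually_at_right_field intro!: exI[of _ "a + 1"])
  then have "W a = 0"
    using assms(1) tendsto_unique[of "at_right a" W "W a" 0] by (simp add: isCont_def filterlim_at_split)
  then show ?thesis
    using assms(1) by (simp add: isCont_def filterlim_at_split)
qed

section \<open>Traveling waves\<close>

lemma C1_on_continuous: "C1_on a b h \<Longrightarrow> continuous_on {a..b} h"
  unfolding C1_on_def continuous_on_eq_continuous_within by (auto intro: DERIV_continuous)

locale traveling_wave_profile =
  fixes D f g :: "real \<Rightarrow> real" and c :: real and \<phi> :: "real \<Rightarrow> real"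
  assumes continuous_f: "continuous_on {0..1} f"
    and continuous_D: "continuous_on {0..1} D"
    and continuous_g: "continuous_on {0..1} g"
    and traveling_wave: "traveling_wave D f g c \<phi>"
begin

lemma continuous_\<phi>: "continuous_on UNIV \<phi>" and \<phi>_range: "\<phi> x \<in> {0..1}"
  using traveling_wave unfolding traveling_wave_def by auto

definition flux :: "real \<Rightarrow> real" where
  "flux x = D (\<phi> x) * deriv \<phi> x"

definition transport :: "real \<Rightarrow> real" where
  "transport x = f (\<phi> x) - c * \<phi> x"

definition reaction_integral :: "real \<Rightarrow> real" where
  "reaction_integral = primitive (\<lambda>x. g (\<phi> x))"

definition first_integral :: "real \<Rightarrow> real" where
  "first_integral x = flux x - transport x + reaction_integral x"

lemma \<phi>_image: "\<phi> ` S \<subseteq> {0..1}"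
  using \<phi>_range by auto

lemma continuous_reaction: "continuous_on UNIV (\<lambda>x. g (\<phi> x))"
  by (rule continuous_on_compose2[OF continuous_g continuous_\<phi> \<phi>_image])

lemma continuous_transport: "continuous_on UNIV transport"
  unfolding transport_def[abs_def]
  by (intro continuous_intros continuous_\<phi> continuous_on_compose2[OF continuous_f continuous_\<phi> \<phi>_image])

lemma continuous_reaction_integral: "continuous_on UNIV reaction_integral"
  unfolding reaction_integral_def by (rule continuous_primitive[OF continuous_reaction])

lemma set_integrable_flux: "compact K \<Longrightarrow> set_integrable lborel K flux"
  using traveling_wave unfolding traveling_wave_def flux_def[abs_def] by auto

lemma set_integrable_first_integral: "set_integrable lborel {a..b} first_integral"
  unfolding first_integral_def[abs_def]
  by (intro set_integral_add set_integral_diff set_integrable_flux borel_integrable_atLeastAtMost'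
      continuous_on_subset[OF continuous_transport] continuous_on_subset[OF continuous_reaction_integral]) auto

lemma set_integrable_first_integral_Ioc: "set_integrable lborel {a<..b} first_integral"
  by (rule set_integrable_subset[OF set_integrable_first_integral[of a b]]) auto

lemma weak_equation:
  assumes \<psi>: "smooth \<psi>" and vanish: "\<And>x. R \<le> \<bar>x\<bar> \<Longrightarrow> \<psi> x = 0"
  shows "(LINT x:{-R..R}|lborel. flux x * deriv \<psi> x - transport x * deriv \<psi> x - g (\<phi> x) * \<psi> x) = 0"
proof -
  have "deriv \<psi> x = 0" if "R < \<bar>x\<bar>" for x
  proof (rule DERIV_imp_deriv)
    have "open {y. R < \<bar>y\<bar>}"
      by (auto intro!: open_Collect_less continuous_intros)
    then show "(\<psi> has_real_derivative 0) (at x)"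
      using that vanish by (intro has_field_derivative_transform_within_open[OF DERIV_const]) auto
  qed
  then have integrand: "(flux x - f (\<phi> x) + c * \<phi> x) * deriv \<psi> x - g (\<phi> x) * \<psi> x
      = indicator {-R..R} x * (flux x * deriv \<psi> x - transport x * deriv \<psi> x - g (\<phi> x) * \<psi> x)" for x
    using vanish[of x] by (cases "x \<in> {-R..R}") (auto simp: transport_def algebra_simps)
  have "test_function \<psi>"
    by (rule smooth_imp_test_function[where R = R, OF \<psi> vanish])
  then have "(LINT x|lborel. (flux x - f (\<phi> x) + c * \<phi> x) * deriv \<psi> x - g (\<phi> x) * \<psi> x) = 0"
    using traveling_wave unfolding traveling_wave_def flux_def by blast
  then show ?thesis
    by (simp add: set_lebesgue_integral_def integrand)
qed

lemma first_integral_weak_derivative_zero: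
  assumes \<psi>: "smooth \<psi>" and vanish: "\<And>x. R \<le> \<bar>x\<bar> \<Longrightarrow> \<psi> x = 0" and "0 \<le> R"
  shows "(LINT x:{-R..R}|lborel. first_integral x * deriv \<psi> x) = 0"
proof -
  have cont: "continuous_on {-R..R} h" if "continuous_on UNIV h" for h :: "real \<Rightarrow> real"
    using that by (rule continuous_on_subset) simp
  have d\<psi>: "continuous_on UNIV (deriv \<psi>)"
    by (rule smooth_deriv_continuous[OF \<psi>])
  have int_flux: "set_integrable lborel {-R..R} (\<lambda>x. flux x * deriv \<psi> x)"
    by (intro set_integrable_mult_continuous set_integrable_flux cont d\<psi>) auto
  have int_transport: "set_integrable lborel {-R..R} (\<lambda>x. transport x * deriv \<psi> x)"
    by (intro borel_integrable_atLeastAtMost' cont continuous_intros continuous_transport d\<psi>)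
  have int_reaction: "set_integrable lborel {-R..R} (\<lambda>x. g (\<phi> x) * \<psi> x)"
    by (intro borel_integrable_atLeastAtMost' cont continuous_intros continuous_reaction smooth_continuous \<psi>)
  have int_integral: "set_integrable lborel {-R..R} (\<lambda>x. reaction_integral x * deriv \<psi> x)"
    by (intro borel_integrable_atLeastAtMost' cont continuous_intros continuous_reaction_integral d\<psi>)
  have by_parts: "(LINT x:{-R..R}|lborel. g (\<phi> x) * \<psi> x)
      = - (LINT x:{-R..R}|lborel. reaction_integral x * deriv \<psi> x)"
    unfolding reaction_integral_def
    using vanish \<open>0 \<le> R\<close> by (intro set_integral_primitive_by_parts continuous_reaction \<psi>) auto
  have "(LINT x:{-R..R}|lborel. first_integral x * deriv \<psi> x)
      = (LINT x:{-R..R}|lborel. (flux x * deriv \<psi> x - transport x * deriv \<psi> x - g (\<phi> x) * \<psi> x)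
          + (g (\<phi> x) * \<psi> x + reaction_integral x * deriv \<psi> x))"
    by (simp add: first_integral_def algebra_simps)
  also have "\<dots> = (LINT x:{-R..R}|lborel. flux x * deriv \<psi> x - transport x * deriv \<psi> x - g (\<phi> x) * \<psi> x)
      + ((LINT x:{-R..R}|lborel. g (\<phi> x) * \<psi> x) + (LINT x:{-R..R}|lborel. reaction_integral x * deriv \<psi> x))"
    using int_flux int_transport int_reaction int_integral by simp
  also have "\<dots> = 0"
    using weak_equation[OF \<psi> vanish] by_parts by simp
  finally show ?thesis .
qed

lemma first_integral_smoothed_indicators:
  assumes "0 < L" "0 < e" "e \<le> 1" "\<bar>s\<bar> + L + 2 \<le> R"
  shows "(LINT x:{-R..R}|lborel. first_integral x * smoothed_indicator e s (s + L) x)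
    = L * (LINT x:{-R..R}|lborel. first_integral x * smoothed_indicator e 0 1 x)"
proof -
  define \<psi> where "\<psi> x = smoothed_ramp e s (s + L) x - L * smoothed_ramp e 0 1 x" for x
  have "smooth \<psi>"
    unfolding \<psi>_def[abs_def] by (intro smooth_diff smooth_mult smooth_const smooth_smoothed_ramp)
  \<comment> \<open>far to the right the two ramps have reached heights \<open>L\<close> and \<open>1\<close>\<close>
  moreover have "\<psi> x = 0" if "R \<le> \<bar>x\<bar>" for x
  proof (cases "x < 0")
    case True
    then show ?thesis
      using that assms by (simp add: \<psi>_def smoothed_ramp_eq_0)
  next
    case False
    then show ?thesis
      using that assms by (simp add: \<psi>_def smoothed_ramp_eq_length)
  qed
  moreover have "deriv \<psi> = (\<lambda>x. smoothed_indicator e s (s + L) x - L * smoothed_indicator e 0 1 x)"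
    unfolding \<psi>_def[abs_def]
    by (intro ext DERIV_imp_deriv DERIV_diff DERIV_cmult smoothed_ramp_has_derivative assms(2))
  ultimately have "0 = (LINT x:{-R..R}|lborel. first_integral x * smoothed_indicator e s (s + L) x
      - L * (first_integral x * smoothed_indicator e 0 1 x))"
    using first_integral_weak_derivative_zero[of \<psi> R] assms by (simp add: algebra_simps)
  also have "\<dots> = (LINT x:{-R..R}|lborel. first_integral x * smoothed_indicator e s (s + L) x)
      - L * (LINT x:{-R..R}|lborel. first_integral x * smoothed_indicator e 0 1 x)"
    using assms(2) by (simp add: set_integrable_mult_continuous set_integrable_first_integral
        continuous_on_subset[OF continuous_smoothed_indicator])
  finally show ?thesis
    by simp
qed

lemma first_integral_interval_average:
  assumes "0 < L"
  shows "(LINT x:{s<..s+L}|lborel. first_integral x) = L * (LINT x:{0<..1}|lborel. first_integral x)"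
proof -
  define R where "R = \<bar>s\<bar> + L + 2"
  define h where "h x = indicator {-R..R} x * first_integral x" for x
  have h: "integrable lborel h"
    using set_integrable_first_integral[of "-R" R] by (simp add: h_def[abs_def] set_integrable_def)
  have "(\<lambda>n. (LINT x|lborel. h x * smoothed_indicator (1 / Suc n) s (s + L) x)
      - L * (LINT x|lborel. h x * smoothed_indicator (1 / Suc n) 0 1 x))
    \<longlonglongrightarrow> (LINT x:{s<..s+L}|lborel. h x) - L * (LINT x:{0<..1}|lborel. h x)"
    using assms by (intro tendsto_diff tendsto_mult tendsto_const tendsto_integral_smoothed_indicator h) auto
  moreover have "(LINT x|lborel. h x * smoothed_indicator (1 / Suc n) s (s + L) x)
      - L * (LINT x|lborel. h x * smoothed_indicator (1 / Suc n) 0 1 x) = 0" for n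
    using first_integral_smoothed_indicators[of L "1 / Suc n" s R] assms
    by (simp add: R_def set_lebesgue_integral_def h_def mult.assoc)
  ultimately have "(LINT x:{s<..s+L}|lborel. h x) - L * (LINT x:{0<..1}|lborel. h x) = 0"
    by (simp add: LIMSEQ_const_iff)
  moreover have "(LINT x:{a<..b}|lborel. h x) = (LINT x:{a<..b}|lborel. first_integral x)"
    if "{a<..b} \<subseteq> {-R..R}" for a b
    using that by (intro set_lebesgue_integral_cong) (auto simp: h_def)
  moreover have "{s<..s+L} \<subseteq> {-R..R}" "{0<..1} \<subseteq> {-R..R}"
    using assms by (auto simp: R_def)
  ultimately show ?thesis
    by simp
qed

definition first_integral_constant :: real where
  "first_integral_constant = (LINT x:{0<..1}|lborel. first_integral x)"

lemma first_integral_AE_constant: "AE x in lborel. first_integral x = first_integral_constant"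
proof -
  have "AE x in lborel. first_integral x - first_integral_constant = 0"
  proof (rule AE_zero_if_interval_integrals_zero)
    fix a b :: real
    have const: "set_integrable lborel {a<..b} (\<lambda>_. first_integral_constant)"
      by (rule set_integrable_subset[OF borel_integrable_atLeastAtMost'[of a b]]) auto
    then show "set_integrable lborel {a<..b} (\<lambda>x. first_integral x - first_integral_constant)"
      by (intro set_integral_diff set_integrable_first_integral_Ioc)
    assume "a < b"
    then show "(LINT x:{a<..b}|lborel. first_integral x - first_integral_constant) = 0"
      using first_integral_interval_average[of "b - a" a] const set_integrable_first_integral_Ioc
      by (simp add: first_integral_constant_def set_integral_const)
  qed
  then show ?thesis
    by simp
qed

definition continuous_flux :: "real \<Rightarrow> real" where
  "continuous_flux x = transport x - reaction_integral x + first_integral_constant"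

lemma continuous_continuous_flux: "continuous_on UNIV continuous_flux"
  unfolding continuous_flux_def[abs_def]
  by (intro continuous_intros continuous_transport continuous_reaction_integral)

lemma continuous_flux_AE_eq_flux: "AE x in lborel. continuous_flux x = flux x"
  using first_integral_AE_constant
  by eventually_elim (simp add: continuous_flux_def first_integral_def)

end

section \<open>Wavefronts\<close>

locale wavefront_profile = traveling_wave_profile +
  fixes \<gamma> :: real
  assumes \<gamma>: "0 < \<gamma>" "\<gamma> < 1"
    and g_nonpos: "\<And>u. 0 \<le> u \<Longrightarrow> u < \<gamma> \<Longrightarrow> g u \<le> 0"
    and g_nonneg: "\<And>u. \<gamma> < u \<Longrightarrow> u \<le> 1 \<Longrightarrow> 0 \<le> g u"
    and antimono_\<phi>: "antimono \<phi>"
    and \<phi>_at_bot: "(\<phi> \<longlongrightarrow> 1) at_bot" and \<phi>_at_top: "(\<phi> \<longlongrightarrow> 0) at_top"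
    and AE_differentiable_\<phi>: "AE x in lborel. \<phi> differentiable (at x)"
begin

lemma continuous_flux_short_excursions:
  obtains C where "\<And>a b e. a \<le> b \<Longrightarrow> 0 < e \<Longrightarrow> (\<And>x. x \<in> {a..b} \<Longrightarrow> e \<le> \<bar>continuous_flux x\<bar>)
    \<Longrightarrow> e * (b - a) \<le> C"
proof -
  obtain B0 where "\<And>u. u \<in> {0..1} \<Longrightarrow> \<bar>D u\<bar> \<le> B0"
    using compact_imp_bounded[OF compact_continuous_image[OF continuous_D compact_Icc]]
    unfolding bounded_iff by force
  then obtain B where B: "0 < B" "\<And>u. u \<in> {0..1} \<Longrightarrow> \<bar>D u\<bar> \<le> B"
    by (metis max.strict_coboundedI2 max.coboundedI1 zero_less_one)
  have "e * (b - a) \<le> B" if "a \<le> b" "0 < e" and large: "\<And>x. x \<in> {a..b} \<Longrightarrow> e \<le> \<bar>continuous_flux x\<bar>"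
    for a b e
  proof -
    have "AE x in lborel. x \<in> {a..b} \<longrightarrow> \<phi> differentiable (at x) \<and> e / B \<le> \<bar>deriv \<phi> x\<bar>"
      using AE_differentiable_\<phi> continuous_flux_AE_eq_flux
    proof eventually_elim
      case (elim x)
      show ?case
      proof
        assume "x \<in> {a..b}"
        then have "e \<le> \<bar>D (\<phi> x)\<bar> * \<bar>deriv \<phi> x\<bar>"
          using large[of x] elim by (simp add: flux_def abs_mult)
        also have "\<dots> \<le> B * \<bar>deriv \<phi> x\<bar>"
          using B(2)[OF \<phi>_range] by (intro mult_right_mono) auto
        finally show "\<phi> differentiable (at x) \<and> e / B \<le> \<bar>deriv \<phi> x\<bar>"
          using elim B(1) by (simp add: divide_le_eq mult.commute)
      qed
    qed
    then have "e / B * (b - a) \<le> \<phi> a - \<phi> b"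
      using B(1) that by (intro antimono_steep_interval_length antimono_\<phi>) auto
    also have "\<dots> \<le> 1"
      using \<phi>_range[of a] \<phi>_range[of b] by simp
    finally show ?thesis
      using B(1) by (simp add: field_simps)
  qed
  then show ?thesis
    using that by blast
qed

lemma continuous_flux_tendsto_at_bot: "(continuous_flux \<longlongrightarrow> 0) at_bot"
proof -
  obtain C where short: "\<And>a b e. a \<le> b \<Longrightarrow> 0 < e \<Longrightarrow> (\<And>x. x \<in> {a..b} \<Longrightarrow> e \<le> \<bar>continuous_flux x\<bar>)
    \<Longrightarrow> e * (b - a) \<le> C"
    using continuous_flux_short_excursions by blast
  obtain M where M: "\<And>x. x \<le> M \<Longrightarrow> \<gamma> < \<phi> x"
    using order_tendstoD(1)[OF \<phi>_at_bot \<gamma>(2)] by (auto simp: eventually_at_bot_linorder)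
  have "((\<lambda>x. f (\<phi> x)) \<longlongrightarrow> f 1) at_bot"
    using continuous_on_tendsto_compose[OF continuous_f \<phi>_at_bot] \<phi>_range by auto
  then have "(transport \<longlongrightarrow> f 1 - c * 1) at_bot"
    unfolding transport_def[abs_def] by (intro tendsto_intros \<phi>_at_bot)
  then show ?thesis
  proof (rule tendsto_0_at_bot_if_short_excursions[OF _ _ short])
    fix x y assume "x \<le> y" "y \<le> M"
    then have "reaction_integral x \<le> reaction_integral y"
      unfolding reaction_integral_def
      using M \<phi>_range by (intro primitive_mono continuous_reaction g_nonneg) auto
    then show "continuous_flux y - transport y \<le> continuous_flux x - transport x"
      by (simp add: continuous_flux_def)
  qed
qed

lemma continuous_flux_tendsto_at_top: "(continuous_flux \<longlongrightarrow> 0) at_top"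
proof -
  obtain C where short: "\<And>a b e. a \<le> b \<Longrightarrow> 0 < e \<Longrightarrow> (\<And>x. x \<in> {a..b} \<Longrightarrow> e \<le> \<bar>continuous_flux x\<bar>)
    \<Longrightarrow> e * (b - a) \<le> C"
    using continuous_flux_short_excursions by blast
  obtain M where M: "\<And>x. M \<le> x \<Longrightarrow> \<phi> x < \<gamma>"
    using order_tendstoD(2)[OF \<phi>_at_top \<gamma>(1)] by (auto simp: eventually_at_top_linorder)
  have "((\<lambda>x. f (\<phi> x)) \<longlongrightarrow> f 0) at_top"
    using continuous_on_tendsto_compose[OF continuous_f \<phi>_at_top] \<phi>_range by auto
  then have "(transport \<longlongrightarrow> f 0 - c * 0) at_top"
    unfolding transport_def[abs_def] by (intro tendsto_intros \<phi>_at_top)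
  then show ?thesis
  proof (rule tendsto_0_at_top_if_short_excursions[OF _ _ short])
    fix x y assume "M \<le> x" "x \<le> y"
    then have "reaction_integral y \<le> reaction_integral x"
      unfolding reaction_integral_def
      using M \<phi>_range by (intro primitive_antimono continuous_reaction g_nonpos) auto
    then show "continuous_flux x - transport x \<le> continuous_flux y - transport y"
      by (simp add: continuous_flux_def)
  qed
qed

lemma continuous_flux_zero_where_constant:
  assumes "open U" "\<And>y. y \<in> U \<Longrightarrow> \<phi> y = k" "x \<in> U"
  shows "continuous_flux x = 0"
proof (rule continuous_zero_if_AE_zero_on_open[OF continuous_continuous_flux assms(1) _ assms(3)])
  have flat: "deriv \<phi> y = 0" if "y \<in> U" for y
    using assms(1,2) that
    by (intro DERIV_imp_deriv has_field_derivative_transform_within_open[OF DERIV_const]) auto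
  show "AE y in lborel. y \<in> U \<longrightarrow> continuous_flux y = 0"
    using continuous_flux_AE_eq_flux by eventually_elim (simp add: flux_def flat)
qed

lemma continuous_flux_tendsto_at_right_Inf:
  assumes "bdd_below {x. \<phi> x < 1}"
  shows "(continuous_flux \<longlongrightarrow> 0) (at_right (Inf {x. \<phi> x < 1}))"
proof (rule tendsto_at_right_if_zero_below)
  show "isCont continuous_flux (Inf {x. \<phi> x < 1})"
    using continuous_continuous_flux by (simp add: continuous_on_eq_continuous_at)
  have "\<phi> y = 1" if "y < Inf {x. \<phi> x < 1}" for y
  proof (rule ccontr)
    assume "\<phi> y \<noteq> 1"
    then have "y \<in> {x. \<phi> x < 1}"
      using \<phi>_range[of y] by auto
    then show False
      using cInf_lower[OF _ assms] that by fastforce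
  qed
  then show "continuous_flux x = 0" if "x < Inf {x. \<phi> x < 1}" for x
    using that by (intro continuous_flux_zero_where_constant[of "{..<Inf {x. \<phi> x < 1}}"]) auto
qed

lemma continuous_flux_tendsto_at_left_Sup:
  assumes "bdd_above {x. \<phi> x > 0}"
  shows "(continuous_flux \<longlongrightarrow> 0) (at_left (Sup {x. \<phi> x > 0}))"
proof (rule tendsto_at_left_if_zero_above)
  show "isCont continuous_flux (Sup {x. \<phi> x > 0})"
    using continuous_continuous_flux by (simp add: continuous_on_eq_continuous_at)
  have "\<phi> y = 0" if "Sup {x. \<phi> x > 0} < y" for y
  proof (rule ccontr)
    assume "\<phi> y \<noteq> 0"
    then have "y \<in> {x. \<phi> x > 0}"
      using \<phi>_range[of y] by auto
    then show False
      using cSup_upper[OF _ assms] that by fastforce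
  qed
  then show "continuous_flux x = 0" if "Sup {x. \<phi> x > 0} < x" for x
    using that by (intro continuous_flux_zero_where_constant[of "{Sup {x. \<phi> x > 0}<..}"]) auto
qed

end

theorem lemma3p1:
  fixes \<alpha> \<gamma> c :: real and D f g \<phi> :: "real \<Rightarrow> real"
  assumes "0 < \<alpha>" "\<alpha> < 1" "0 < \<gamma>" "\<gamma> < 1"
    and "C1_on 0 1 f" "f 0 = 0"
    and "C1_on 0 1 D"
    and "\<forall>u\<in>{0<..<\<alpha>}. D u > 0" "\<forall>u\<in>{\<alpha><..<1}. D u < 0"
    and "continuous_on {0..1} g"
    and "\<forall>u\<in>{0<..<\<gamma>}. g u < 0" "\<forall>u\<in>{\<gamma><..<1}. g u > 0"
    and "g 0 = 0" "g \<gamma> = 0" "g 1 = 0"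
    and "wavefront D f g c \<phi>"
  shows "\<exists>W. continuous_on UNIV W \<and>
           (AE \<xi> in lborel. W \<xi> = D (\<phi> \<xi>) * deriv \<phi> \<xi>) \<and>
           (W \<longlongrightarrow> 0) (if bdd_below {\<xi>. \<phi> \<xi> < 1} then at_right (Inf {\<xi>. \<phi> \<xi> < 1}) else at_bot) \<and>
           (W \<longlongrightarrow> 0) (if bdd_above {\<xi>. \<phi> \<xi> > 0} then at_left (Sup {\<xi>. \<phi> \<xi> > 0}) else at_top)"
proof -
  interpret wavefront_profile D f g c \<phi> \<gamma>
  proof
    show "continuous_on {0..1} f" "continuous_on {0..1} D"
      using assms(5,7) by (simp_all add: C1_on_continuous)
    show "g u \<le> 0" if "0 \<le> u" "u < \<gamma>" for u
      using assms(11,13) that by (cases "u = 0") (auto simp: less_eq_real_def)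
    show "0 \<le> g u" if "\<gamma> < u" "u \<le> 1" for u
      using assms(12,15) that by (cases "u = 1") (auto simp: less_eq_real_def)
  qed (use assms(3,4,10,16) in \<open>auto simp: wavefront_def traveling_wave_def\<close>)
  show ?thesis
    using continuous_continuous_flux continuous_flux_AE_eq_flux
      continuous_flux_tendsto_at_bot continuous_flux_tendsto_at_right_Inf
      continuous_flux_tendsto_at_top continuous_flux_tendsto_at_left_Sup
    by (intro exI[of _ continuous_flux]) (simp add: flux_def)
qed

end
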